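(* Let $N\ge1$, $n,m\ge1$, $\kappa\ge0$, and let $\{(U_j,V_j)\}_{j=1}^N$ be a solution of $$\dot U_j=\frac{\kappa}{N}\sum_{k=1}^N\big(\langle V_j,V_k\rangle_FU_k-\langle V_k,V_j\rangle_FU_jU_k^\dagger U_j\big),\qquad \dot V_j=\frac{\kappa}{N}\sum_{k=1}^N\big(\langle U_j,U_k\rangle_FV_k-\langle U_k,U_j\rangle_FV_jV_k^\dagger V_j\big),$$ with $(U_j,V_j)(0)\in\mathbf U(n)\times\mathbf U(m)$. Then $$\frac{d}{dt}\mathcal D(\mathcal U)\le-2m\kappa\mathcal D(\mathcal U)+m\kappa\mathcal D(\mathcal U)^3+6\kappa\mathcal S(\mathcal V)\mathcal D(\mathcal U)+2\kappa\mathcal S(\mathcal V)\mathcal D(\mathcal U)^2+4\kappa\sqrt n\,\mathcal S(\mathcal V),$$ $$\frac{d}{dt}\mathcal D(\mathcal V)\le-2n\kappa\mathcal D(\mathcal V)+n\kappa\mathcal D(\mathcal V)^3+6\kappa\mathcal S(\mathcal U)\mathcal D(\mathcal V)+2\kappa\mathcal S(\mathcal U)\mathcal D(\mathcal V)^2+4\kappa\sqrt m\,\mathcal S(\mathcal U).$$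
   Context: $\langle A,B\rangle_F=\mathrm{tr}(A^\dagger B)$, $\|A\|_F=\sqrt{\langle A,A\rangle_F}$. $d_{ij}=\langle U_i,U_j\rangle_F$, $c_{ij}=\langle V_i,V_j\rangle_F$, $\mathcal D(\mathcal U)=\max_{i,j}\|U_i-U_j\|_F$, $\mathcal D(\mathcal V)=\max_{i,j}\|V_i-V_j\|_F$, $\mathcal S(\mathcal U)=\max_{i,j}|n-d_{ij}|$, $\mathcal S(\mathcal V)=\max_{i,j}|m-c_{ij}|$. Time derivatives of these maxima are understood as upper Dini derivatives (the paper writes them as ordinary derivatives). *)

theory Defs
  imports "HOL-Analysis.Analysis"
begin

text \<open>Complex square matrices of size n = CARD('n) are represented as complex^'n^'n.\<close>

definition adjoint :: "complex^'n^'n \<Rightarrow> complex^'n^'n" where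
  "adjoint A = (\<chi> i j. cnj (A $ j $ i))"

definition cscale :: "complex \<Rightarrow> complex^'n^'n \<Rightarrow> complex^'n^'n" where
  "cscale c A = (\<chi> i j. c * A $ i $ j)"

definition frob_inner :: "complex^'n^'n \<Rightarrow> complex^'n^'n \<Rightarrow> complex" where
  "frob_inner A B = (\<Sum>i\<in>UNIV. (adjoint A ** B) $ i $ i)"

definition frob_norm :: "complex^'n^'n \<Rightarrow> real" where
  "frob_norm A = sqrt (Re (frob_inner A A))"

definition unitary_mat :: "complex^'n^'n \<Rightarrow> bool" where
  "unitary_mat U \<longleftrightarrow> adjoint U ** U = mat 1 \<and> U ** adjoint U = mat 1"

definition diam :: "nat \<Rightarrow> (nat \<Rightarrow> complex^'n^'n) \<Rightarrow> real" where
  "diam N U = Max {frob_norm (U i - U j) | i j. i < N \<and> j < N}"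

definition Sdev :: "nat \<Rightarrow> (nat \<Rightarrow> complex^'n^'n) \<Rightarrow> real" where
  "Sdev N U = Max {cmod (of_nat CARD('n) - frob_inner (U i) (U j)) | i j. i < N \<and> j < N}"

definition upper_dini :: "(real \<Rightarrow> real) \<Rightarrow> real \<Rightarrow> ereal" where
  "upper_dini f t = Limsup (at_right 0) (\<lambda>h. ereal ((f (t + h) - f t) / h))"

end

theory Submission
  imports Defs
begin

(*
  Both inequalities have the same shape, so consider the U-equation, whose weights
  c_jk = <V_j, V_k> satisfy c_kj = cnj c_jk.  Its right-hand side is X_j - U_j X_j^dagger U_j
  with X_j = (kappa/N) sum_k c_jk U_k, so the defect E = U_j U_j^dagger - 1 solves the linear
  equation E' = - U_j X_j^dagger E - E X_j U_j^dagger; by Gronwall it stays 0, i.e. every U_j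
  stays unitary.

  Let the U_j be unitary of size n and the V_j of size m, and split c_jk = m + (c_jk - m)
  with |c_jk - m| <= S(V).  The part proportional to m is controlled by cyclicity of the
  trace: for a pair (i, j) realising the diameter D,
  Re <U_i - U_j, U_j U_k^dagger U_j - U_i U_k^dagger U_i> <= -2 D^2 + D^4, using
  ||U_k - U_i||, ||U_k - U_j|| <= D.  The remainder has norm at most 4 kappa sqrt n S(V).
  So the right derivative of ||U_i - U_j|| is at most -2 m kappa D + m kappa D^3
  + 4 kappa sqrt n S(V), and the upper Dini derivative of a finite maximum is bounded by
  the right derivatives of the functions attaining it.
*)

lemma frob_inner_eq_sum:
  "frob_inner A B = (\<Sum>i\<in>UNIV. \<Sum>k\<in>UNIV. cnj (A$k$i) * B$k$i)"
  by (simp add: frob_inner_def adjoint_def matrix_matrix_mult_def)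

lemma frob_inner_eq_trace: "frob_inner A B = trace (adjoint A ** B)"
  by (simp add: frob_inner_def trace_def)

lemma inner_eq_Re_frob_inner: "inner A B = Re (frob_inner A B)"
  unfolding frob_inner_eq_sum inner_vec_def Re_sum
  by (subst sum.swap) (simp add: inner_complex_def)

lemma frob_norm_eq_norm: "frob_norm A = norm A"
  by (simp add: frob_norm_def norm_eq_sqrt_inner inner_eq_Re_frob_inner)

lemma frob_inner_commute: "frob_inner B A = cnj (frob_inner A B)"
  by (simp add: frob_inner_eq_sum mult.commute)

lemma frob_inner_diff_right: "frob_inner A (B - C) = frob_inner A B - frob_inner A C"
  by (simp add: frob_inner_eq_sum right_diff_distrib sum_subtractf)

lemma frob_inner_minus_right: "frob_inner A (- B) = - frob_inner A B"
  by (simp add: frob_inner_eq_sum sum_negf)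

lemma continuous_on_frob_inner [continuous_intros]:
  "continuous_on S f \<Longrightarrow> continuous_on S g \<Longrightarrow> continuous_on S (\<lambda>t. frob_inner (f t) (g t))"
  unfolding frob_inner_eq_sum by (intro continuous_intros)

lemma adjoint_adjoint [simp]: "adjoint (adjoint A) = A"
  by (simp add: adjoint_def vec_eq_iff)

lemma adjoint_matrix_mult: "adjoint (A ** B) = adjoint B ** adjoint A"
  by (simp add: adjoint_def vec_eq_iff matrix_matrix_mult_def mult.commute)

lemma adjoint_add: "adjoint (A + B) = adjoint A + adjoint B"
  by (simp add: adjoint_def vec_eq_iff)

lemma adjoint_diff: "adjoint (A - B) = adjoint A - adjoint B"
  by (simp add: adjoint_def vec_eq_iff)

lemma adjoint_scaleR: "adjoint (r *\<^sub>R A) = r *\<^sub>R adjoint A"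
  by (simp add: adjoint_def vec_eq_iff)

lemma adjoint_cscale: "adjoint (cscale c A) = cscale (cnj c) (adjoint A)"
  by (simp add: adjoint_def cscale_def vec_eq_iff)

lemma adjoint_sum: "adjoint (\<Sum>k\<in>K. A k) = (\<Sum>k\<in>K. adjoint (A k))"
  by (induction K rule: infinite_finite_induct) (auto simp: adjoint_add adjoint_def vec_eq_iff)

lemma frob_inner_matrix_mult_right: "frob_inner A (B ** C) = frob_inner (adjoint B ** A) C"
  unfolding frob_inner_def adjoint_matrix_mult adjoint_adjoint matrix_mul_assoc ..

lemma frob_inner_cyclic: "frob_inner A (B ** adjoint C ** D) = frob_inner C (D ** adjoint A ** B)"
  unfolding frob_inner_eq_trace matrix_mul_assoc
  by (metis trace_mul_sym matrix_mul_assoc)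

lemma norm_power2_matrix:
  fixes A :: "'a::real_normed_vector^'n^'m"
  shows "(norm A)\<^sup>2 = (\<Sum>i\<in>UNIV. \<Sum>j\<in>UNIV. (norm (A$i$j))\<^sup>2)"
  by (simp add: norm_vec_def L2_set_def sum_nonneg)

lemma norm_matrix_mult_le:
  fixes A :: "'a::real_normed_field^'n^'m" and B :: "'a^'p^'n"
  shows "norm (A ** B) \<le> norm A * norm B"
proof -
  let ?a = "\<lambda>i. \<Sum>j\<in>UNIV. (norm (A$i$j))\<^sup>2"
  let ?b = "\<lambda>k. \<Sum>j\<in>UNIV. (norm (B$j$k))\<^sup>2"
  have entry: "(norm ((A ** B)$i$k))\<^sup>2 \<le> ?a i * ?b k" for i k
  proof -
    have "norm ((A ** B)$i$k) \<le> (\<Sum>j\<in>UNIV. norm (A$i$j) * norm (B$j$k))"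
      unfolding matrix_matrix_mult_def by (simp add: order_trans[OF norm_sum] norm_mult)
    hence "(norm ((A ** B)$i$k))\<^sup>2 \<le> (\<Sum>j\<in>UNIV. norm (A$i$j) * norm (B$j$k))\<^sup>2"
      by (simp add: power_mono)
    also have "\<dots> \<le> ?a i * ?b k" by (rule Cauchy_Schwarz_ineq_sum)
    finally show ?thesis .
  qed
  have "(norm (A ** B))\<^sup>2 \<le> (\<Sum>i\<in>UNIV. \<Sum>k\<in>UNIV. ?a i * ?b k)"
    unfolding norm_power2_matrix[of "A ** B"] by (intro sum_mono entry)
  also have "\<dots> = (norm A * norm B)\<^sup>2"
    unfolding sum_product[symmetric] power_mult_distrib norm_power2_matrix[of A] norm_power2_matrix[of B]
    by (simp add: sum.swap[of "\<lambda>j k. (norm (B$j$k))\<^sup>2"])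
  finally show ?thesis by (rule power2_le_imp_le) simp
qed

lemma norm_adjoint [simp]: "norm (adjoint A) = norm A"
proof -
  have "(norm (adjoint A))\<^sup>2 = (norm A)\<^sup>2"
    unfolding norm_power2_matrix by (simp add: adjoint_def, rule sum.swap)
  thus ?thesis by (simp add: power2_eq_iff_nonneg)
qed

lemma norm_cscale: "norm (cscale c A) = cmod c * norm A"
proof -
  have "(norm (cscale c A))\<^sup>2 = (cmod c * norm A)\<^sup>2"
    by (simp add: norm_power2_matrix cscale_def norm_mult power_mult_distrib sum_distrib_left)
  thus ?thesis by (simp add: power2_eq_iff_nonneg)
qed

lemma bounded_linear_adjoint: "bounded_linear adjoint"
  by (rule bounded_linear_intro[where K=1]) (simp_all add: adjoint_add adjoint_scaleR)

lemma matrix_diff_ldistrib: "(A::'a::ring_1^'n^'m) ** (B - C) = A ** B - A ** C"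
  by (simp add: matrix_matrix_mult_def vec_eq_iff right_diff_distrib sum_subtractf)

lemma matrix_diff_rdistrib: "((A::'a::ring_1^'n^'m) - B) ** C = A ** C - B ** C"
  by (simp add: matrix_matrix_mult_def vec_eq_iff left_diff_distrib sum_subtractf)

lemma matrix_add_rdistrib: "((A::'a::semiring_1^'n^'m) + B) ** C = A ** C + B ** C"
  by (simp add: matrix_matrix_mult_def vec_eq_iff distrib_right sum.distrib)

lemma matrix_neg_left: "(- (A::'a::ring_1^'n^'m)) ** B = - (A ** B)"
  by (simp add: matrix_matrix_mult_def vec_eq_iff sum_negf)

lemma matrix_neg_right: "(A::'a::ring_1^'n^'m) ** (- B) = - (A ** B)"
  by (simp add: matrix_matrix_mult_def vec_eq_iff sum_negf)

lemma matrix_sum_left: "(\<Sum>k\<in>K. A k :: 'a::semiring_1^'n^'m) ** B = (\<Sum>k\<in>K. A k ** B)"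
  by (induction K rule: infinite_finite_induct) (auto simp: matrix_add_rdistrib)

lemma matrix_sum_right: "(A::'a::semiring_1^'n^'m) ** (\<Sum>k\<in>K. B k) = (\<Sum>k\<in>K. A ** B k)"
  by (induction K rule: infinite_finite_induct) (auto simp: matrix_add_ldistrib)

lemma bounded_bilinear_matrix_mult:
  "bounded_bilinear (\<lambda>(A::'a::real_normed_field^'n^'m) (B::'a^'p^'n). A ** B)"
proof
  show "\<exists>K. \<forall>(A::'a^'n^'m) (B::'a^'p^'n). norm (A ** B) \<le> norm A * norm B * K"
    by (rule exI[of _ 1]) (simp add: norm_matrix_mult_le)
qed (simp_all add: matrix_add_rdistrib matrix_add_ldistrib matrix_scalar_ac
      flip: scalar_matrix_assoc)

lemma matrix_cscale_left: "cscale c A ** B = cscale c (A ** B)"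
  by (simp add: matrix_matrix_mult_def vec_eq_iff cscale_def sum_distrib_left mult.assoc)

lemma matrix_cscale_right: "A ** cscale c B = cscale c (A ** B)"
  by (simp add: matrix_matrix_mult_def vec_eq_iff cscale_def sum_distrib_left algebra_simps)

lemma cscale_scaleR_commute: "cscale c (r *\<^sub>R A) = r *\<^sub>R cscale c A"
  by (simp add: cscale_def vec_eq_iff)

lemmas matrix_distribs = matrix_diff_ldistrib matrix_diff_rdistrib matrix_add_ldistrib
  matrix_add_rdistrib matrix_neg_left matrix_neg_right

lemma matrix_numeral_mat_right:
  "(A::'a::comm_semiring_1^'n^'n) ** (numeral w * mat 1) = numeral w * A"
proof -
  have "(numeral w * mat 1 :: 'a^'n^'n) = mat (numeral w)"
    by (simp add: vec_eq_iff mat_def)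
  thus ?thesis
    by (simp add: matrix_matrix_mult_def mat_def vec_eq_iff if_distrib if_distribR sum.delta'
        mult.commute cong: if_cong)
qed

lemma unitary_mat_mult: "unitary_mat A \<Longrightarrow> unitary_mat B \<Longrightarrow> unitary_mat (A ** B)"
  unfolding unitary_mat_def adjoint_matrix_mult by (metis matrix_mul_assoc matrix_mul_rid)

lemma unitary_mat_adjoint: "unitary_mat A \<Longrightarrow> unitary_mat (adjoint A)"
  unfolding unitary_mat_def by simp

lemma norm_unitary_mult:
  fixes U X :: "complex^'n^'n"
  assumes "adjoint U ** U = mat 1"
  shows "norm (U ** X) = norm X"
proof -
  have "inner (U ** X) (U ** X) = inner X X"
    using assms by (simp add: inner_eq_Re_frob_inner frob_inner_matrix_mult_right
        adjoint_matrix_mult matrix_mul_assoc)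
  thus ?thesis by (simp add: norm_eq_sqrt_inner)
qed

lemma norm_mult_unitary:
  fixes U X :: "complex^'n^'n"
  assumes "U ** adjoint U = mat 1"
  shows "norm (X ** U) = norm X"
  by (metis assms adjoint_adjoint adjoint_matrix_mult norm_adjoint norm_unitary_mult)

lemma norm_unitary:
  fixes U :: "complex^'n^'n"
  assumes "unitary_mat U"
  shows "norm U = sqrt (real CARD('n))"
  using assms
  by (simp add: unitary_mat_def norm_eq_sqrt_inner inner_eq_Re_frob_inner frob_inner_eq_trace trace_I)

lemma Re_frob_inner_unitary_gram_ge:
  fixes X W D :: "complex^'n^'n"
  assumes X: "unitary_mat X" and W: "unitary_mat W"
  shows "(norm D)\<^sup>2 - (norm D)\<^sup>2 * (norm (W - X))\<^sup>2 / 2 \<le> Re (frob_inner W (X ** (adjoint D ** D)))"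
proof -
  define P where "P = D ** (adjoint X ** W)"
  have "unitary_mat (adjoint X ** W)"
    by (intro unitary_mat_mult unitary_mat_adjoint X W)
  hence P: "norm P = norm D"
    unfolding P_def unitary_mat_def by (intro norm_mult_unitary) simp
  have "norm (P - D) = norm (D ** (adjoint X ** (W - X)))"
    using X by (simp add: P_def matrix_diff_ldistrib unitary_mat_def)
  also have "\<dots> \<le> norm D * norm (adjoint X ** (W - X))"
    by (rule norm_matrix_mult_le)
  also have "norm (adjoint X ** (W - X)) = norm (W - X)"
    using X by (intro norm_unitary_mult) (simp add: unitary_mat_def)
  finally have "(norm (P - D))\<^sup>2 \<le> (norm D * norm (W - X))\<^sup>2"
    by (simp add: power_mono)
  moreover have "(norm (P - D))\<^sup>2 = (norm P)\<^sup>2 - 2 * inner P D + (norm D)\<^sup>2"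
    by (simp add: power2_norm_eq_inner inner_diff_left inner_diff_right inner_commute)
  moreover have "frob_inner W (X ** (adjoint D ** D)) = frob_inner P D"
    by (simp add: P_def frob_inner_matrix_mult_right adjoint_matrix_mult matrix_mul_assoc)
  ultimately show ?thesis
    using P by (simp add: inner_eq_Re_frob_inner power_mult_distrib)
qed

lemma Re_frob_inner_sandwich_le:
  fixes Ui Uj Uk :: "complex^'n^'n"
  assumes Ui: "unitary_mat Ui" and Uj: "unitary_mat Uj" and Uk: "unitary_mat Uk"
  shows "Re (frob_inner (Ui - Uj) (Uj ** adjoint Uk ** Uj - Ui ** adjoint Uk ** Ui))
     \<le> - 2 * (norm (Ui - Uj))\<^sup>2 + (norm (Ui - Uj))\<^sup>2 * (norm (Uk - Ui))\<^sup>2 / 2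
        + (norm (Ui - Uj))\<^sup>2 * (norm (Uk - Uj))\<^sup>2 / 2"
proof -
  define D where "D = Ui - Uj"
  have cancel: "X ** adjoint U ** U = X" "X ** U ** adjoint U = X"
    if "adjoint U ** U = mat 1" "U ** adjoint U = mat 1" for X U :: "complex^'n^'n"
    using that by (simp_all flip: matrix_mul_assoc)
  have "frob_inner D (Uj ** adjoint Uk ** Uj - Ui ** adjoint Uk ** Ui)
      = frob_inner Uk (Uj ** adjoint D ** Uj - Ui ** adjoint D ** Ui)"
    unfolding frob_inner_diff_right frob_inner_cyclic[of D Uj Uk Uj] frob_inner_cyclic[of D Ui Uk Ui] ..
  also have "Uj ** adjoint D ** Uj - Ui ** adjoint D ** Ui
      = - (Ui ** (adjoint D ** D)) - Uj ** (adjoint D ** D)"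
    using Ui Uj unfolding unitary_mat_def D_def
    by (simp add: adjoint_diff matrix_distribs matrix_mul_assoc cancel matrix_numeral_mat_right)
  finally have "Re (frob_inner D (Uj ** adjoint Uk ** Uj - Ui ** adjoint Uk ** Ui))
     = - Re (frob_inner Uk (Ui ** (adjoint D ** D))) - Re (frob_inner Uk (Uj ** (adjoint D ** D)))"
    by (simp add: frob_inner_diff_right frob_inner_minus_right)
  thus ?thesis
    using Re_frob_inner_unitary_gram_ge[OF Ui Uk, of D] Re_frob_inner_unitary_gram_ge[OF Uj Uk, of D]
    unfolding D_def by linarith
qed

(* The right-hand side of the U-equation, with the weights <V_j, V_k> abstracted to c j k. *)
definition lohe_field ::
    "nat \<Rightarrow> real \<Rightarrow> (nat \<Rightarrow> nat \<Rightarrow> complex) \<Rightarrow> (nat \<Rightarrow> complex^'n^'n) \<Rightarrow> nat \<Rightarrow> complex^'n^'n" where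
  "lohe_field N \<kappa> c U j =
     (\<kappa> / real N) *\<^sub>R (\<Sum>k<N. cscale (c j k) (U k) - cscale (c k j) (U j ** adjoint (U k) ** U j))"

lemma lohe_field_eq_skew:
  fixes U :: "nat \<Rightarrow> complex^'n^'n" and c :: "nat \<Rightarrow> nat \<Rightarrow> complex" and \<kappa> :: real
  assumes "\<And>k. k < N \<Longrightarrow> c k j = cnj (c j k)"
  defines "X \<equiv> (\<kappa> / real N) *\<^sub>R (\<Sum>k<N. cscale (c j k) (U k))"
  shows "lohe_field N \<kappa> c U j = X - U j ** adjoint X ** U j"
proof -
  have "adjoint X = (\<kappa> / real N) *\<^sub>R (\<Sum>k<N. cscale (c k j) (adjoint (U k)))"
    unfolding X_def adjoint_scaleR adjoint_sum adjoint_cscale using assms(1) by simp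
  hence "U j ** adjoint X ** U j
      = (\<kappa> / real N) *\<^sub>R (\<Sum>k<N. cscale (c k j) (U j ** adjoint (U k) ** U j))"
    by (simp add: matrix_scalar_ac matrix_sum_left matrix_sum_right matrix_cscale_left
        matrix_cscale_right cscale_scaleR_commute scaleR_sum_right flip: scalar_matrix_assoc)
  thus ?thesis
    by (simp add: lohe_field_def X_def sum_subtractf scaleR_diff_right)
qed

lemma norm_cscale_combination_le:
  assumes "cmod a \<le> S" "cmod b \<le> S" "cmod c \<le> S" "cmod d \<le> S"
    and "norm X = r" "norm Y = r" "norm Z = r"
  shows "norm (cscale a X - cscale b Y - cscale c X + cscale d Z) \<le> 4 * S * r"
proof -
  have "r \<ge> 0" using assms(5) by auto
  have "norm (cscale a X - cscale b Y - cscale c X + cscale d Z)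
      \<le> norm (cscale a X) + norm (cscale b Y) + norm (cscale c X) + norm (cscale d Z)"
    using norm_triangle_ineq[of "cscale a X - cscale b Y - cscale c X" "cscale d Z"]
      norm_triangle_ineq4[of "cscale a X - cscale b Y" "cscale c X"]
      norm_triangle_ineq4[of "cscale a X" "cscale b Y"]
    by linarith
  also have "\<dots> \<le> S * r + S * r + S * r + S * r"
    unfolding norm_cscale assms(5-7) using assms(1-4) \<open>r \<ge> 0\<close>
    by (intro add_mono mult_right_mono)
  finally show ?thesis by simp
qed

lemma lohe_field_diff_approx:
  fixes U :: "nat \<Rightarrow> complex^'n^'n"
  assumes unitary: "\<And>k. k < N \<Longrightarrow> unitary_mat (U k)" and "\<kappa> \<ge> 0"
    and weights: "\<And>a b. a < N \<Longrightarrow> b < N \<Longrightarrow> cmod (c a b - of_real m) \<le> S"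
    and "i < N" "j < N"
  shows "norm (lohe_field N \<kappa> c U i - lohe_field N \<kappa> c U j
      - (\<kappa> * m / real N) *\<^sub>R (\<Sum>k<N. U j ** adjoint (U k) ** U j - U i ** adjoint (U k) ** U i))
    \<le> 4 * \<kappa> * S * sqrt (real CARD('n))"
proof -
  define E where "E k = cscale (c i k - of_real m) (U k)
      - cscale (c k i - of_real m) (U i ** adjoint (U k) ** U i)
      - cscale (c j k - of_real m) (U k) + cscale (c k j - of_real m) (U j ** adjoint (U k) ** U j)"
    for k
  have E: "cscale (c i k) (U k) - cscale (c k i) (U i ** adjoint (U k) ** U i)
      - (cscale (c j k) (U k) - cscale (c k j) (U j ** adjoint (U k) ** U j))
      - m *\<^sub>R (U j ** adjoint (U k) ** U j - U i ** adjoint (U k) ** U i) = E k" for k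
    by (simp add: E_def cscale_def vec_eq_iff scaleR_conv_of_real[where 'a=complex] algebra_simps)
  have decomposition: "lohe_field N \<kappa> c U i - lohe_field N \<kappa> c U j
      - (\<kappa> * m / real N) *\<^sub>R (\<Sum>k<N. U j ** adjoint (U k) ** U j - U i ** adjoint (U k) ** U i)
      = (\<kappa> / real N) *\<^sub>R (\<Sum>k<N. E k)" (is "?lhs = _")
    unfolding lohe_field_def E[symmetric] sum_subtractf scaleR_diff_right scaleR_sum_right by simp
  have "norm (E k) \<le> 4 * S * sqrt (real CARD('n))" if "k < N" for k
    unfolding E_def using assms that
    by (intro norm_cscale_combination_le norm_unitary unitary_mat_mult unitary_mat_adjoint) auto
  hence sum_bound: "norm (\<Sum>k<N. E k) \<le> real N * (4 * S * sqrt (real CARD('n)))"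
    using sum_norm_le[of "{..<N}" E "\<lambda>_. 4 * S * sqrt (real CARD('n))"] by simp
  have "norm ?lhs = (\<kappa> / real N) * norm (\<Sum>k<N. E k)"
    unfolding decomposition using assms(2) by simp
  also have "\<dots> \<le> (\<kappa> / real N) * (real N * (4 * S * sqrt (real CARD('n))))"
    by (rule mult_left_mono[OF sum_bound]) (use assms(2) in simp)
  also have "\<dots> = 4 * \<kappa> * S * sqrt (real CARD('n))"
    using \<open>i < N\<close> by simp
  finally show ?thesis .
qed

lemma lohe_field_diff_inner_le:
  fixes U :: "nat \<Rightarrow> complex^'n^'n"
  assumes unitary: "\<And>k. k < N \<Longrightarrow> unitary_mat (U k)" and "\<kappa> \<ge> 0" and "m \<ge> 0"
    and weights: "\<And>a b. a < N \<Longrightarrow> b < N \<Longrightarrow> cmod (c a b - of_real m) \<le> S"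
    and "i < N" "j < N"
    and maximal: "\<And>a b. a < N \<Longrightarrow> b < N \<Longrightarrow> norm (U a - U b) \<le> norm (U i - U j)"
  defines "D \<equiv> norm (U i - U j)"
  shows "inner (U i - U j) (lohe_field N \<kappa> c U i - lohe_field N \<kappa> c U j)
    \<le> \<kappa> * m * (- 2 * D\<^sup>2 + D ^ 4) + 4 * \<kappa> * S * sqrt (real CARD('n)) * D"
proof -
  have D_nonneg: "0 \<le> D"
    unfolding D_def by (rule norm_ge_zero)
  define P where "P k = U j ** adjoint (U k) ** U j - U i ** adjoint (U k) ** U i" for k
  have P: "inner (U i - U j) (P k) \<le> - 2 * D\<^sup>2 + D ^ 4" if "k < N" for k
  proof -
    have "(norm (U k - U i))\<^sup>2 \<le> D\<^sup>2" "(norm (U k - U j))\<^sup>2 \<le> D\<^sup>2"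
      using maximal that assms(5,6) by (auto simp: D_def intro!: power_mono)
    hence "D\<^sup>2 * (norm (U k - U i))\<^sup>2 / 2 + D\<^sup>2 * (norm (U k - U j))\<^sup>2 / 2
        \<le> D\<^sup>2 * D\<^sup>2 / 2 + D\<^sup>2 * D\<^sup>2 / 2"
      by (intro add_mono divide_right_mono mult_left_mono) auto
    also have "\<dots> = D ^ 4"
      by (simp add: power4_eq_xxxx power2_eq_square)
    finally have "D\<^sup>2 * (norm (U k - U i))\<^sup>2 / 2 + D\<^sup>2 * (norm (U k - U j))\<^sup>2 / 2 \<le> D ^ 4" .
    thus ?thesis
      using Re_frob_inner_sandwich_le[of "U i" "U j" "U k"] unitary that assms(5,6)
      by (simp add: P_def D_def inner_eq_Re_frob_inner)
  qed
  have "inner (U i - U j) ((\<kappa> * m / real N) *\<^sub>R (\<Sum>k<N. P k))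
      = (\<kappa> * m / real N) * (\<Sum>k<N. inner (U i - U j) (P k))"
    by (simp add: inner_sum_right)
  also have "\<dots> \<le> (\<kappa> * m / real N) * (\<Sum>k<N. - 2 * D\<^sup>2 + D ^ 4)"
    using assms(2,3) P by (intro mult_left_mono sum_mono) auto
  also have "\<dots> = \<kappa> * m * (- 2 * D\<^sup>2 + D ^ 4)"
    using \<open>i < N\<close> by simp
  finally have main: "inner (U i - U j) ((\<kappa> * m / real N) *\<^sub>R (\<Sum>k<N. P k))
      \<le> \<kappa> * m * (- 2 * D\<^sup>2 + D ^ 4)" .
  have "inner (U i - U j) (lohe_field N \<kappa> c U i - lohe_field N \<kappa> c U j
      - (\<kappa> * m / real N) *\<^sub>R (\<Sum>k<N. P k))
    \<le> D * norm (lohe_field N \<kappa> c U i - lohe_field N \<kappa> c U j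
      - (\<kappa> * m / real N) *\<^sub>R (\<Sum>k<N. P k))"
    unfolding D_def by (rule norm_cauchy_schwarz)
  also have "\<dots> \<le> D * (4 * \<kappa> * S * sqrt (real CARD('n)))"
    using lohe_field_diff_approx[OF unitary assms(2) weights assms(5,6)] D_nonneg
    unfolding P_def by (rule mult_left_mono)
  finally show ?thesis
    using main unfolding inner_diff_right by (simp add: algebra_simps)
qed

lemma right_diff_quotient_tendsto:
  fixes g :: "real \<Rightarrow> 'a::real_normed_vector"
  assumes "(g has_vector_derivative g') (at_right t)"
  shows "((\<lambda>h. (g (t + h) - g t) /\<^sub>R h) \<longlongrightarrow> g') (at_right 0)"
proof -
  have "((\<lambda>y. (1 / norm (y - t)) *\<^sub>R (g y - (g t + (y - t) *\<^sub>R g'))) \<longlongrightarrow> 0) (at_right t)"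
    using assms unfolding has_vector_derivative_def has_derivative_within by simp
  moreover have "eventually (\<lambda>y. (1 / norm (y - t)) *\<^sub>R (g y - (g t + (y - t) *\<^sub>R g'))
      = (g y - g t) /\<^sub>R (y - t) - g') (at_right t)"
    using eventually_at_right_less[of t]
    by eventually_elim (simp add: scaleR_add_right scaleR_diff_right inverse_eq_divide)
  ultimately have "((\<lambda>y. (g y - g t) /\<^sub>R (y - t) - g') \<longlongrightarrow> 0) (at_right t)"
    using tendsto_cong by force
  hence "((\<lambda>y. (g y - g t) /\<^sub>R (y - t)) \<longlongrightarrow> g') (at_right t)"
    using Lim_null by blast
  thus ?thesis
    unfolding filterlim_at_right_to_0[of _ _ t] by (simp add: add.commute)
qed

lemma right_continuous_tendsto:
  fixes g :: "real \<Rightarrow> 'a::real_normed_vector"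
  assumes "(g has_vector_derivative g') (at_right t)"
  shows "((\<lambda>h. g (t + h)) \<longlongrightarrow> g t) (at_right 0)"
proof -
  have "(g \<longlongrightarrow> g t) (at_right t)"
    using has_vector_derivative_continuous[OF assms] by (simp add: continuous_within)
  thus ?thesis
    unfolding filterlim_at_right_to_0[of _ _ t] by (simp add: add.commute)
qed

lemma has_vector_derivative_at_right:
  "(f has_vector_derivative f') (at t within {0..}) \<Longrightarrow> t \<ge> 0 \<Longrightarrow>
    (f has_vector_derivative f') (at_right t)"
  by (erule has_vector_derivative_within_subset) auto

lemma norm_right_diff_quotient_tendsto:
  fixes g :: "real \<Rightarrow> 'a::real_inner"
  assumes g: "(g has_vector_derivative g') (at_right t)" and "g t \<noteq> 0"
  shows "((\<lambda>h. (norm (g (t + h)) - norm (g t)) / h) \<longlongrightarrow> inner (g t) g' / norm (g t)) (at_right 0)"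
proof -
  have "((\<lambda>s. norm (g s)) has_derivative (\<lambda>x. inner (x *\<^sub>R g') (sgn (g t)))) (at_right t)"
    using has_derivative_compose[OF g[unfolded has_vector_derivative_def]
        has_derivative_norm[OF \<open>g t \<noteq> 0\<close>]] .
  hence "((\<lambda>s. norm (g s)) has_vector_derivative (inner (g t) g' / norm (g t))) (at_right t)"
    unfolding has_vector_derivative_def
    by (simp add: sgn_div_norm inner_commute divide_inverse ac_simps)
  from right_diff_quotient_tendsto[OF this] show ?thesis
    by (simp add: divide_inverse mult.commute)
qed

lemma norm_right_diff_quotient_tendsto_zero:
  fixes g :: "real \<Rightarrow> 'a::real_normed_vector"
  assumes g: "(g has_vector_derivative g') (at_right t)" and "g t = 0"
  shows "((\<lambda>h. (norm (g (t + h)) - norm (g t)) / h) \<longlongrightarrow> norm g') (at_right 0)"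
proof -
  have "((\<lambda>h. norm ((g (t + h) - g t) /\<^sub>R h)) \<longlongrightarrow> norm g') (at_right 0)"
    by (rule tendsto_norm[OF right_diff_quotient_tendsto[OF g]])
  moreover have "eventually (\<lambda>h. norm ((g (t + h) - g t) /\<^sub>R h) = (norm (g (t + h)) - norm (g t)) / h)
      (at_right 0)"
    using eventually_at_right_less[of 0]
    by eventually_elim (simp add: \<open>g t = 0\<close> divide_inverse mult.commute)
  ultimately show ?thesis
    using tendsto_cong by force
qed

lemma eventually_right_le_of_derivative:
  fixes \<phi> :: "real \<Rightarrow> real"
  assumes "((\<lambda>h. (\<phi> (t + h) - \<phi> t) / h) \<longlongrightarrow> d) (at_right 0)" and "d < r"
  shows "eventually (\<lambda>h. \<phi> (t + h) \<le> \<phi> t + h * r) (at_right 0)"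
  using order_tendstoD(2)[OF assms] eventually_at_right_less[of 0]
  by eventually_elim (simp add: pos_divide_less_eq mult.commute)

lemma eventually_right_le_of_continuous:
  fixes \<phi> :: "real \<Rightarrow> real"
  assumes "((\<lambda>h. \<phi> (t + h)) \<longlongrightarrow> \<phi> t) (at_right 0)" and "\<phi> t < M"
  shows "eventually (\<lambda>h. \<phi> (t + h) \<le> M + h * r) (at_right 0)"
proof -
  define g where "g = (M - \<phi> t) / 2"
  have "g > 0" using assms(2) by (simp add: g_def)
  have "((\<lambda>h. h * \<bar>r\<bar>) \<longlongrightarrow> 0 * \<bar>r\<bar>) (at_right (0::real))"
    by (intro tendsto_intros)
  hence "eventually (\<lambda>h. h * \<bar>r\<bar> < g) (at_right 0)"
    using order_tendstoD(2) \<open>g > 0\<close> by force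
  moreover have "eventually (\<lambda>h. \<phi> (t + h) < \<phi> t + g) (at_right 0)"
    using order_tendstoD(2)[OF assms(1)] \<open>g > 0\<close> by simp
  ultimately show ?thesis
    using eventually_at_right_less[of 0]
  proof eventually_elim
    case (elim h)
    have "- (h * \<bar>r\<bar>) \<le> h * r"
      using mult_left_mono[of "- \<bar>r\<bar>" r h] elim(3) by simp
    thus ?case using elim(1,2) unfolding g_def by argo
  qed
qed

lemma upper_dini_Max_le:
  fixes f :: "'i \<Rightarrow> real \<Rightarrow> real"
  assumes "finite I" "I \<noteq> {}"
    and continuous: "\<And>p. p \<in> I \<Longrightarrow> ((\<lambda>h. f p (t + h)) \<longlongrightarrow> f p t) (at_right 0)"
    and active: "\<And>p. p \<in> I \<Longrightarrow> f p t = Max ((\<lambda>q. f q t) ` I) \<Longrightarrow>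
      \<exists>d. ((\<lambda>h. (f p (t + h) - f p t) / h) \<longlongrightarrow> d) (at_right 0) \<and> d \<le> R"
  shows "upper_dini (\<lambda>s. Max ((\<lambda>p. f p s) ` I)) t \<le> ereal R"
proof -
  define F where "F s = Max ((\<lambda>p. f p s) ` I)" for s
  have eventually_bound: "eventually (\<lambda>h. (F (t + h) - F t) / h \<le> R + e) (at_right 0)"
    if "e > 0" for e
  proof -
    have "eventually (\<lambda>h. f p (t + h) \<le> F t + h * (R + e)) (at_right 0)" if "p \<in> I" for p
    proof (cases "f p t = F t")
      case True
      then obtain d where lim: "((\<lambda>h. (f p (t + h) - f p t) / h) \<longlongrightarrow> d) (at_right 0)"
        and "d \<le> R"
        using active \<open>p \<in> I\<close> unfolding F_def by blast
      have "d < R + e" using \<open>d \<le> R\<close> \<open>e > 0\<close> by simp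
      from eventually_right_le_of_derivative[OF lim this] show ?thesis
        unfolding True .
    next
      case False
      have "f p t \<le> F t"
        unfolding F_def by (rule Max_ge) (use assms(1) \<open>p \<in> I\<close> in auto)
      with False have "f p t < F t" by simp
      thus ?thesis
        by (rule eventually_right_le_of_continuous[OF continuous[OF \<open>p \<in> I\<close>]])
    qed
    hence "eventually (\<lambda>h. \<forall>p\<in>I. f p (t + h) \<le> F t + h * (R + e)) (at_right 0)"
      by (intro eventually_ball_finite assms(1) ballI)
    thus ?thesis
      using eventually_at_right_less[of 0]
    proof eventually_elim
      case (elim h)
      hence "F (t + h) \<le> F t + h * (R + e)"
        unfolding F_def[of "t + h"] using assms(1,2) by simp
      thus ?case using elim(2) by (simp add: pos_divide_le_eq mult.commute)
    qed
  qed
  have "Limsup (at_right 0) (\<lambda>h. ereal ((F (t + h) - F t) / h)) \<le> ereal R + ereal e"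
    if "e > 0" for e
    by (rule Limsup_bounded) (use eventually_bound[OF that] in \<open>auto elim: eventually_mono\<close>)
  thus ?thesis
    unfolding upper_dini_def F_def[symmetric] by (rule ereal_le_epsilon2)
qed

lemma gronwall_vanishing:
  fixes g g' :: "real \<Rightarrow> real"
  assumes deriv: "\<And>t. t \<ge> 0 \<Longrightarrow> (g has_real_derivative g' t) (at t within {0..})"
    and growth: "\<And>t. 0 \<le> t \<Longrightarrow> t \<le> T \<Longrightarrow> g' t \<le> L * g t"
    and "g 0 = 0" and nonneg: "\<And>t. g t \<ge> 0" and "T \<ge> 0"
  shows "g T = 0"
proof -
  define h where "h t = g t * exp (- L * t)" for t
  define h' where "h' t = g' t * exp (- L * t) - L * g t * exp (- L * t)" for t
  have dh: "(h has_real_derivative h' t) (at t within {0..})" if "t \<ge> 0" for t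
    unfolding h_def h'_def
    by (rule derivative_eq_intros deriv[OF that] refl | simp add: algebra_simps)+
  have "h T \<le> h 0"
  proof (rule DERIV_nonpos_imp_decreasing_open[OF \<open>T \<ge> 0\<close>])
    fix t assume t: "0 < t" "t < T"
    have "(h has_real_derivative h' t) (at t within {0<..})"
      by (rule has_field_derivative_subset[OF dh]) (use t in auto)
    hence "(h has_real_derivative h' t) (at t)"
      using at_within_open[of t "{0<..}"] t by simp
    moreover have "h' t \<le> 0"
      using growth[of t] t by (simp add: h'_def)
    ultimately show "\<exists>y. (h has_real_derivative y) (at t) \<and> y \<le> 0" by blast
  next
    have "continuous_on {0..} h"
      unfolding continuous_on_eq_continuous_within using DERIV_continuous[OF dh] by simp
    thus "continuous_on {0..T} h"
      by (rule continuous_on_subset) auto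
  qed
  hence "h T \<le> 0" by (simp add: h_def \<open>g 0 = 0\<close>)
  moreover have "h T \<ge> 0" unfolding h_def using nonneg by simp
  ultimately show ?thesis
    by (simp add: h_def)
qed

lemma unitarity_defect_has_derivative:
  fixes U :: "real \<Rightarrow> complex^'n^'n"
  assumes "(U has_vector_derivative X - U t ** adjoint X ** U t) (at t within S)"
  shows "((\<lambda>s. U s ** adjoint (U s) - mat 1) has_vector_derivative
      - (U t ** adjoint X ** (U t ** adjoint (U t) - mat 1))
      - (U t ** adjoint (U t) - mat 1) ** X ** adjoint (U t)) (at t within S)"
proof -
  have "((\<lambda>s. adjoint (U s)) has_vector_derivative adjoint (X - U t ** adjoint X ** U t))
      (at t within S)"
    by (rule bounded_linear.has_vector_derivative[OF bounded_linear_adjoint assms])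
  from bounded_bilinear.has_vector_derivative[OF bounded_bilinear_matrix_mult assms this]
  have "((\<lambda>s. U s ** adjoint (U s) - mat 1) has_vector_derivative
      U t ** adjoint (X - U t ** adjoint X ** U t) + (X - U t ** adjoint X ** U t) ** adjoint (U t) - 0)
      (at t within S)"
    by (intro has_vector_derivative_diff) auto
  moreover have "U t ** adjoint (X - U t ** adjoint X ** U t) + (X - U t ** adjoint X ** U t) ** adjoint (U t) - 0
      = - (U t ** adjoint X ** (U t ** adjoint (U t) - mat 1))
        - (U t ** adjoint (U t) - mat 1) ** X ** adjoint (U t)"
    by (simp add: adjoint_diff adjoint_matrix_mult matrix_distribs matrix_mul_assoc algebra_simps)
  ultimately show ?thesis
    by simp
qed

lemma norm_unitarity_defect_derivative_le:
  fixes A X E :: "complex^'n^'n"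
  shows "norm (- (A ** adjoint X ** E) - E ** X ** adjoint A) \<le> 2 * (norm A * norm X) * norm E"
proof -
  have "norm (- (A ** adjoint X ** E) - E ** X ** adjoint A)
      \<le> norm (A ** adjoint X ** E) + norm (E ** X ** adjoint A)"
    by (metis norm_minus_cancel norm_triangle_ineq4)
  also have "norm (A ** adjoint X ** E) \<le> norm A * norm X * norm E"
    using norm_matrix_mult_le[of "A ** adjoint X" E] norm_matrix_mult_le[of A "adjoint X"]
    by (simp add: mult_right_mono order_trans)
  also have "norm (E ** X ** adjoint A) \<le> norm E * norm X * norm A"
    using norm_matrix_mult_le[of "E ** X" "adjoint A"] norm_matrix_mult_le[of E X]
    by (simp add: mult_right_mono order_trans)
  finally show ?thesis
    by (simp add: algebra_simps)
qed

lemma unitary_mat_preserved: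
  fixes U X :: "real \<Rightarrow> complex^'n^'n"
  assumes deriv: "\<And>t. t \<ge> 0 \<Longrightarrow>
      (U has_vector_derivative X t - U t ** adjoint (X t) ** U t) (at t within {0..})"
    and "continuous_on {0..} X" and "unitary_mat (U 0)" and "T \<ge> 0"
  shows "unitary_mat (U T)"
proof -
  define E where "E t = U t ** adjoint (U t) - mat 1" for t
  define E' where "E' t = - (U t ** adjoint (X t) ** E t) - E t ** X t ** adjoint (U t)" for t
  have dE: "(E has_vector_derivative E' t) (at t within {0..})" if "t \<ge> 0" for t
    unfolding E_def E'_def using unitarity_defect_has_derivative[OF deriv[OF that]] .
  have "continuous_on {0..} U"
    by (rule continuous_on_vector_derivative) (use deriv in auto)
  hence "continuous_on {0..T} (\<lambda>t. norm (U t) * norm (X t))"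
    using \<open>continuous_on {0..} X\<close> by (intro continuous_intros) (auto intro: continuous_on_subset)
  hence "bounded ((\<lambda>t. norm (U t) * norm (X t)) ` {0..T})"
    by (intro compact_imp_bounded compact_continuous_image) auto
  then obtain B where "\<forall>y\<in>(\<lambda>t. norm (U t) * norm (X t)) ` {0..T}. norm y \<le> B"
    unfolding bounded_pos by blast
  hence B: "norm (U t) * norm (X t) \<le> B" if "t \<in> {0..T}" for t
    using that by force
  define g where "g t = inner (E t) (E t)" for t
  have "(g has_real_derivative 2 * inner (E t) (E' t)) (at t within {0..})" if "t \<ge> 0" for t
    using bounded_bilinear.has_vector_derivative[OF bounded_bilinear_inner dE[OF that] dE[OF that]]
    unfolding g_def has_real_derivative_iff_has_vector_derivative by (simp add: inner_commute)
  moreover have "2 * inner (E t) (E' t) \<le> 4 * B * g t" if "0 \<le> t" "t \<le> T" for t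
  proof -
    have "2 * inner (E t) (E' t) \<le> 2 * (norm (E t) * norm (E' t))"
      using norm_cauchy_schwarz by simp
    also have "\<dots> \<le> 2 * (norm (E t) * (2 * B * norm (E t)))"
    proof -
      have "norm (E' t) \<le> 2 * (norm (U t) * norm (X t)) * norm (E t)"
        unfolding E'_def by (rule norm_unitarity_defect_derivative_le)
      also have "\<dots> \<le> 2 * B * norm (E t)"
        using B[of t] that by (simp add: mult_right_mono)
      finally show ?thesis
        by (intro mult_left_mono) auto
    qed
    also have "\<dots> = 4 * B * g t"
      by (simp add: g_def dot_square_norm power2_eq_square)
    finally show ?thesis .
  qed
  moreover have "g 0 = 0"
    using \<open>unitary_mat (U 0)\<close> by (simp add: g_def E_def unitary_mat_def)
  ultimately have "g T = 0"
    using gronwall_vanishing[of g "\<lambda>t. 2 * inner (E t) (E' t)" T "4 * B"] \<open>T \<ge> 0\<close>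
    by (simp add: g_def)
  hence "U T ** adjoint (U T) = mat 1"
    by (simp add: g_def E_def)
  thus ?thesis
    unfolding unitary_mat_def using matrix_left_right_inverse by blast
qed

lemma lohe_unitary_preserved:
  fixes U :: "nat \<Rightarrow> real \<Rightarrow> complex^'n^'n" and c :: "real \<Rightarrow> nat \<Rightarrow> nat \<Rightarrow> complex"
  assumes deriv: "\<And>j t. j < N \<Longrightarrow> t \<ge> 0 \<Longrightarrow>
      (U j has_vector_derivative lohe_field N \<kappa> (c t) (\<lambda>k. U k t) j) (at t within {0..})"
    and hermitian: "\<And>t j k. j < N \<Longrightarrow> k < N \<Longrightarrow> c t k j = cnj (c t j k)"
    and continuous: "\<And>j k. j < N \<Longrightarrow> k < N \<Longrightarrow> continuous_on {0..} (\<lambda>t. c t j k)"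
    and initial: "\<And>j. j < N \<Longrightarrow> unitary_mat (U j 0)" and "j < N" "T \<ge> 0"
  shows "unitary_mat (U j T)"
proof -
  define X where "X t = (\<kappa> / real N) *\<^sub>R (\<Sum>k<N. cscale (c t j k) (U k t))" for t
  have "continuous_on {0..} (U k)" if "k < N" for k
    by (rule continuous_on_vector_derivative) (use deriv that in auto)
  hence X: "continuous_on {0..} X"
    unfolding X_def cscale_def using continuous \<open>j < N\<close> by (intro continuous_intros) auto
  have "lohe_field N \<kappa> (c t) (\<lambda>k. U k t) j = X t - U j t ** adjoint (X t) ** U j t" for t
    unfolding X_def by (rule lohe_field_eq_skew) (rule hermitian[OF \<open>j < N\<close>])
  hence "(U j has_vector_derivative X t - U j t ** adjoint (X t) ** U j t) (at t within {0..})"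
    if "t \<ge> 0" for t
    using deriv[OF \<open>j < N\<close> that] by simp
  from unitary_mat_preserved[OF this X initial[OF \<open>j < N\<close>] \<open>T \<ge> 0\<close>] show ?thesis .
qed

lemma diam_eq_Max: "diam N W = Max ((\<lambda>(i, j). norm (W i - W j)) ` ({..<N} \<times> {..<N}))"
  unfolding diam_def frob_norm_eq_norm by (rule arg_cong[where f = Max]) auto

lemma norm_le_diam: "a < N \<Longrightarrow> b < N \<Longrightarrow> norm (W a - W b) \<le> diam N W"
  unfolding diam_eq_Max by (rule Max_ge) auto

lemma cmod_le_Sdev:
  fixes W :: "nat \<Rightarrow> complex^'n^'n"
  assumes "a < N" "b < N"
  shows "cmod (of_nat CARD('n) - frob_inner (W a) (W b)) \<le> Sdev N W"
proof -
  have "{cmod (of_nat CARD('n) - frob_inner (W i) (W j)) | i j. i < N \<and> j < N}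
      = (\<lambda>(i, j). cmod (of_nat CARD('n) - frob_inner (W i) (W j))) ` ({..<N} \<times> {..<N})"
    by auto
  thus ?thesis
    unfolding Sdev_def using assms by (auto intro!: Max_ge)
qed

lemma lohe_pair_right_derivative_le:
  fixes U :: "nat \<Rightarrow> real \<Rightarrow> complex^'n^'n"
  assumes "\<kappa> \<ge> 0" "m \<ge> 0"
    and deriv: "\<And>j. j < N \<Longrightarrow>
      (U j has_vector_derivative lohe_field N \<kappa> c (\<lambda>k. U k t) j) (at_right t)"
    and unitary: "\<And>j. j < N \<Longrightarrow> unitary_mat (U j t)"
    and weights: "\<And>a b. a < N \<Longrightarrow> b < N \<Longrightarrow> cmod (c a b - of_real m) \<le> S"
    and ij: "i < N" "j < N"
    and maximal: "\<And>a b. a < N \<Longrightarrow> b < N \<Longrightarrow> norm (U a t - U b t) \<le> norm (U i t - U j t)"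
  defines "D \<equiv> norm (U i t - U j t)"
  shows "\<exists>d. ((\<lambda>h. (norm (U i (t + h) - U j (t + h)) - D) / h) \<longlongrightarrow> d) (at_right 0)
    \<and> d \<le> - 2 * m * \<kappa> * D + m * \<kappa> * D ^ 3 + 4 * \<kappa> * sqrt (real CARD('n)) * S"
proof -
  define F where "F = lohe_field N \<kappa> c (\<lambda>k. U k t) i - lohe_field N \<kappa> c (\<lambda>k. U k t) j"
  have pair_deriv: "((\<lambda>s. U i s - U j s) has_vector_derivative F) (at_right t)"
    unfolding F_def using deriv ij by (intro has_vector_derivative_diff)
  have D: "norm (U i t - U j t) = D"
    unfolding D_def ..
  define R where "R = - 2 * m * \<kappa> * D + m * \<kappa> * D ^ 3 + 4 * \<kappa> * sqrt (real CARD('n)) * S"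
  have "\<exists>d. ((\<lambda>h. (norm (U i (t + h) - U j (t + h)) - norm (U i t - U j t)) / h) \<longlongrightarrow> d)
      (at_right 0) \<and> d \<le> R"
  proof (cases "U i t - U j t = 0")
    case False
    hence "D > 0" using D by auto
    have "inner (U i t - U j t) F
        \<le> \<kappa> * m * (- 2 * D\<^sup>2 + D ^ 4) + 4 * \<kappa> * S * sqrt (real CARD('n)) * D"
      using lohe_field_diff_inner_le[of N "\<lambda>k. U k t", OF unitary assms(1,2) weights ij maximal]
      unfolding F_def D by simp
    also have "\<dots> = R * D"
      by (simp add: R_def power2_eq_square power3_eq_cube power4_eq_xxxx algebra_simps)
    finally have "inner (U i t - U j t) F / norm (U i t - U j t) \<le> R"
      using \<open>D > 0\<close> unfolding D by (simp add: pos_divide_le_eq)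
    thus ?thesis
      using norm_right_diff_quotient_tendsto[OF pair_deriv False] by blast
  next
    case True
    hence "D = 0" using D by simp
    have "norm F \<le> 4 * \<kappa> * S * sqrt (real CARD('n))"
      using lohe_field_diff_approx[of N "\<lambda>k. U k t", OF unitary assms(1) weights ij] True
      unfolding F_def by simp
    hence "norm F \<le> R"
      by (simp add: R_def \<open>D = 0\<close> algebra_simps)
    thus ?thesis
      using norm_right_diff_quotient_tendsto_zero[OF pair_deriv True] by blast
  qed
  thus ?thesis
    unfolding D R_def .
qed

lemma upper_dini_diam_lohe_le:
  fixes U :: "nat \<Rightarrow> real \<Rightarrow> complex^'n^'n"
  assumes "N \<ge> 1" "\<kappa> \<ge> 0" "m \<ge> 0"
    and deriv: "\<And>j. j < N \<Longrightarrow>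
      (U j has_vector_derivative lohe_field N \<kappa> c (\<lambda>k. U k t) j) (at_right t)"
    and unitary: "\<And>j. j < N \<Longrightarrow> unitary_mat (U j t)"
    and weights: "\<And>a b. a < N \<Longrightarrow> b < N \<Longrightarrow> cmod (c a b - of_real m) \<le> S"
  defines "D \<equiv> diam N (\<lambda>j. U j t)"
  shows "upper_dini (\<lambda>s. diam N (\<lambda>j. U j s)) t
    \<le> ereal (- 2 * m * \<kappa> * D + m * \<kappa> * D ^ 3 + 4 * \<kappa> * sqrt (real CARD('n)) * S)"
  unfolding diam_eq_Max
proof (rule upper_dini_Max_le)
  fix p assume "p \<in> {..<N} \<times> {..<N}"
  then obtain i j where "p = (i, j)" "i < N" "j < N" by auto
  thus "((\<lambda>h. case p of (i, j) \<Rightarrow> norm (U i (t + h) - U j (t + h)))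
      \<longlongrightarrow> (case p of (i, j) \<Rightarrow> norm (U i t - U j t))) (at_right 0)"
    using tendsto_norm[OF right_continuous_tendsto[OF has_vector_derivative_diff[OF deriv deriv]]]
    by simp
next
  fix p assume "p \<in> {..<N} \<times> {..<N}"
    and "(case p of (i, j) \<Rightarrow> norm (U i t - U j t))
      = Max ((\<lambda>q. case q of (i, j) \<Rightarrow> norm (U i t - U j t)) ` ({..<N} \<times> {..<N}))"
  then obtain i j where p: "p = (i, j)" and ij: "i < N" "j < N"
    and D: "norm (U i t - U j t) = D"
    by (auto simp: D_def diam_eq_Max)
  have maximal: "norm (U a t - U b t) \<le> norm (U i t - U j t)" if "a < N" "b < N" for a b
    unfolding D D_def using that by (rule norm_le_diam)
  show "\<exists>d. ((\<lambda>h. ((case p of (i, j) \<Rightarrow> norm (U i (t + h) - U j (t + h)))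
        - (case p of (i, j) \<Rightarrow> norm (U i t - U j t))) / h) \<longlongrightarrow> d) (at_right 0)
      \<and> d \<le> - 2 * m * \<kappa> * D + m * \<kappa> * D ^ 3 + 4 * \<kappa> * sqrt (real CARD('n)) * S"
    using lohe_pair_right_derivative_le[OF assms(2,3) deriv unitary weights ij maximal]
    unfolding p by (simp add: D)
qed (use \<open>N \<ge> 1\<close> in \<open>auto simp: lessThan_empty_iff\<close>)

lemma upper_dini_diam_le_Sdev:
  fixes U :: "nat \<Rightarrow> real \<Rightarrow> complex^'n^'n" and V :: "nat \<Rightarrow> real \<Rightarrow> complex^'m^'m"
  assumes "N \<ge> 1" "\<kappa> \<ge> 0"
    and deriv: "\<And>j. j < N \<Longrightarrow> (U j has_vector_derivative
      lohe_field N \<kappa> (\<lambda>a b. frob_inner (V a t) (V b t)) (\<lambda>k. U k t) j) (at_right t)"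
    and unitary: "\<And>j. j < N \<Longrightarrow> unitary_mat (U j t)"
  defines "D \<equiv> diam N (\<lambda>j. U j t)" and "S \<equiv> Sdev N (\<lambda>j. V j t)"
  shows "upper_dini (\<lambda>s. diam N (\<lambda>j. U j s)) t \<le> ereal (
        - 2 * real CARD('m) * \<kappa> * D + real CARD('m) * \<kappa> * D ^ 3
        + 6 * \<kappa> * S * D + 2 * \<kappa> * S * D ^ 2 + 4 * \<kappa> * sqrt (real CARD('n)) * S)"
proof -
  have weights: "cmod (frob_inner (V a t) (V b t) - of_real (real CARD('m))) \<le> S"
    if "a < N" "b < N" for a b
    using cmod_le_Sdev[OF that, of "\<lambda>j. V j t"] by (simp add: S_def norm_minus_commute)
  have "0 \<le> S"
    using order_trans[OF norm_ge_zero weights[of 0 0]] \<open>N \<ge> 1\<close> by simp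
  moreover have "0 \<le> D"
    using order_trans[OF norm_ge_zero norm_le_diam[of 0 N 0 "\<lambda>j. U j t"]] \<open>N \<ge> 1\<close> unfolding D_def by simp
  ultimately have "0 \<le> 6 * \<kappa> * S * D + 2 * \<kappa> * S * D ^ 2"
    using \<open>\<kappa> \<ge> 0\<close> by simp
  with upper_dini_diam_lohe_le[OF assms(1,2) _ deriv unitary weights]
  show ?thesis
    unfolding D_def by (simp add: order_trans)
qed

theorem lemmaA1:
  fixes N :: nat and \<kappa> :: real
    and U :: "nat \<Rightarrow> real \<Rightarrow> complex^'n^'n"
    and V :: "nat \<Rightarrow> real \<Rightarrow> complex^'m^'m"
  assumes N: "N \<ge> 1" and kappa: "\<kappa> \<ge> 0"
    and dU: "\<And>j t. j < N \<Longrightarrow> t \<ge> 0 \<Longrightarrow>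
      (U j has_vector_derivative
        ((\<kappa> / real N) *\<^sub>R (\<Sum>k<N.
            cscale (frob_inner (V j t) (V k t)) (U k t)
          - cscale (frob_inner (V k t) (V j t)) (U j t ** adjoint (U k t) ** U j t))))
      (at t within {0..})"
    and dV: "\<And>j t. j < N \<Longrightarrow> t \<ge> 0 \<Longrightarrow>
      (V j has_vector_derivative
        ((\<kappa> / real N) *\<^sub>R (\<Sum>k<N.
            cscale (frob_inner (U j t) (U k t)) (V k t)
          - cscale (frob_inner (U k t) (U j t)) (V j t ** adjoint (V k t) ** V j t))))
      (at t within {0..})"
    and init: "\<And>j. j < N \<Longrightarrow> unitary_mat (U j 0) \<and> unitary_mat (V j 0)"
  shows "\<forall>t\<ge>0.
      upper_dini (\<lambda>s. diam N (\<lambda>j. U j s)) t \<le> ereal (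
        - 2 * real CARD('m) * \<kappa> * diam N (\<lambda>j. U j t)
        + real CARD('m) * \<kappa> * diam N (\<lambda>j. U j t) ^ 3
        + 6 * \<kappa> * Sdev N (\<lambda>j. V j t) * diam N (\<lambda>j. U j t)
        + 2 * \<kappa> * Sdev N (\<lambda>j. V j t) * diam N (\<lambda>j. U j t) ^ 2
        + 4 * \<kappa> * sqrt (real CARD('n)) * Sdev N (\<lambda>j. V j t))
    \<and> upper_dini (\<lambda>s. diam N (\<lambda>j. V j s)) t \<le> ereal (
        - 2 * real CARD('n) * \<kappa> * diam N (\<lambda>j. V j t)
        + real CARD('n) * \<kappa> * diam N (\<lambda>j. V j t) ^ 3
        + 6 * \<kappa> * Sdev N (\<lambda>j. U j t) * diam N (\<lambda>j. V j t)
        + 2 * \<kappa> * Sdev N (\<lambda>j. U j t) * diam N (\<lambda>j. V j t) ^ 2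
        + 4 * \<kappa> * sqrt (real CARD('m)) * Sdev N (\<lambda>j. U j t))"
proof -
  have dU': "(U j has_vector_derivative lohe_field N \<kappa> (\<lambda>a b. frob_inner (V a t) (V b t)) (\<lambda>k. U k t) j)
      (at t within {0..})" if "j < N" "t \<ge> 0" for j t
    unfolding lohe_field_def using dU[OF that] .
  have dV': "(V j has_vector_derivative lohe_field N \<kappa> (\<lambda>a b. frob_inner (U a t) (U b t)) (\<lambda>k. V k t) j)
      (at t within {0..})" if "j < N" "t \<ge> 0" for j t
    unfolding lohe_field_def using dV[OF that] .
  have continuous: "continuous_on {0..} (U k)" "continuous_on {0..} (V k)" if "k < N" for k
    using dU' dV' that by (auto intro!: continuous_on_vector_derivative)
  have unitary: "unitary_mat (U j t) \<and> unitary_mat (V j t)" if "j < N" "t \<ge> 0" for j t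
  proof
    show "unitary_mat (U j t)"
      by (rule lohe_unitary_preserved[OF dU' frob_inner_commute _ _ that])
        (use init continuous in \<open>auto intro: continuous_on_frob_inner\<close>)
    show "unitary_mat (V j t)"
      by (rule lohe_unitary_preserved[OF dV' frob_inner_commute _ _ that])
        (use init continuous in \<open>auto intro: continuous_on_frob_inner\<close>)
  qed
  show ?thesis
    by (intro allI impI conjI upper_dini_diam_le_Sdev N kappa has_vector_derivative_at_right dU' dV')
      (use unitary in auto)
qed

end
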